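(* Let $n\ge 3$, let $1\le i<j\le n$, and let $K$ be the $(i,j)$-coordinate coloring of $H_2(n,n-1)$, i.e. $K(x)=(x_i,x_j)\in\mathbb{Z}_2^2$. Then the set of transition edges of $K$ is exactly $\{(x,y): x+y\in\{f_i,f_j\}\}$, and $\mathrm{rb}(K)=\frac{2}{n+1}$. As a consequence, the maximum of $\mathrm{rb}(K')$ over all proper $4$-colorings $K'$ of $H_2(n,n-1)$ equals $\frac{2}{n+1}$.
   Context: $H_2(n,n-1)$ is the simple undirected graph with vertex set $\mathbb{Z}_2^n$ in which $x,y$ are adjacent iff their Hamming distance $|\{i:x_i\ne y_i\}|$ is at least $n-1$. $e_k$ denotes the $k$-th standard basis vector of $\mathbb{Z}_2^n$, $\mathbb{1}$ the all-ones vector, and $f_k=e_k+\mathbb{1}$. For a simple graph $G=(V,E)$ and a proper $k$-coloring $K$, an edge $(x,y)\in E$ is a transition edge for $K$ if swapping the colors of $x$ and $y$ (all other colors unchanged) yields again a proper $k$-coloring; $T(K)$ is the set of transition edges and $\mathrm{rb}(K)=|T(K)|/|E|$ is the robustness. *)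

theory Defs
  imports Complex_Main
begin

text \<open>A simple graph is given by a vertex set V and a symmetric irreflexive
adjacency relation adj; its edges are the unordered pairs {x,y}.\<close>

definition edges :: "'a set \<Rightarrow> ('a \<Rightarrow> 'a \<Rightarrow> bool) \<Rightarrow> 'a set set" where
  "edges V adj = {{x, y} | x y. x \<in> V \<and> y \<in> V \<and> adj x y}"

definition proper_coloring ::
  "'a set \<Rightarrow> ('a \<Rightarrow> 'a \<Rightarrow> bool) \<Rightarrow> 'c set \<Rightarrow> ('a \<Rightarrow> 'c) \<Rightarrow> bool" where
  "proper_coloring V adj C K \<longleftrightarrow>
     (\<forall>x\<in>V. K x \<in> C) \<and> (\<forall>x\<in>V. \<forall>y\<in>V. adj x y \<longrightarrow> K x \<noteq> K y)"

definition swap_colors :: "('a \<Rightarrow> 'c) \<Rightarrow> 'a \<Rightarrow> 'a \<Rightarrow> ('a \<Rightarrow> 'c)" where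
  "swap_colors K x y = K(x := K y, y := K x)"

definition transition_edges ::
  "'a set \<Rightarrow> ('a \<Rightarrow> 'a \<Rightarrow> bool) \<Rightarrow> 'c set \<Rightarrow> ('a \<Rightarrow> 'c) \<Rightarrow> 'a set set" where
  "transition_edges V adj C K =
     {{x, y} | x y. x \<in> V \<and> y \<in> V \<and> adj x y \<and>
                    proper_coloring V adj C (swap_colors K x y)}"

definition robustness ::
  "'a set \<Rightarrow> ('a \<Rightarrow> 'a \<Rightarrow> bool) \<Rightarrow> 'c set \<Rightarrow> ('a \<Rightarrow> 'c) \<Rightarrow> real" where
  "robustness V adj C K =
     real (card (transition_edges V adj C K)) / real (card (edges V adj))"

text \<open>Z_2^n is represented by the power set of the coordinate set {1..n}:
a vector x corresponds to its support {k. x_k = 1}.  Vector addition is the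
symmetric difference, the Hamming distance is the size of the symmetric
difference, e_k = {k}, the all-ones vector is {1..n}, f_k = {1..n} - {k}.\<close>

definition Z2n :: "nat \<Rightarrow> nat set set" where
  "Z2n n = Pow {1..n}"

definition vadd :: "nat set \<Rightarrow> nat set \<Rightarrow> nat set" where
  "vadd x y = (x - y) \<union> (y - x)"

definition hamming :: "nat set \<Rightarrow> nat set \<Rightarrow> nat" where
  "hamming x y = card (vadd x y)"

definition ones :: "nat \<Rightarrow> nat set" where
  "ones n = {1..n}"

definition ebasis :: "nat \<Rightarrow> nat set" where
  "ebasis k = {k}"

definition fvec :: "nat \<Rightarrow> nat \<Rightarrow> nat set" where
  "fvec n k = vadd (ebasis k) (ones n)"

definition H2_adj :: "nat \<Rightarrow> nat set \<Rightarrow> nat set \<Rightarrow> bool" where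
  "H2_adj n x y \<longleftrightarrow> hamming x y \<ge> n - 1"

definition coord_coloring :: "nat \<Rightarrow> nat \<Rightarrow> nat set \<Rightarrow> bool \<times> bool" where
  "coord_coloring i j x = (i \<in> x, j \<in> x)"

end

theory Submission
  imports Defs
begin

text \<open>Double counting expresses the robustness of a coloring of a finite graph as the ratio of
the sum of transition degrees to the sum of degrees.  In a proper coloring, a transition neighbour y
of x is the only neighbour of x with the color of y, so with 4 colors a vertex of degree at least 4
has at most 2 transition neighbours.  H_2(n,n-1) is (n+1)-regular, the neighbours of x being x + 1
and the x + f_k; for the (i,j)-coordinate coloring exactly x + f_i and x + f_j are transition
neighbours, so the bound 2/(n+1) is attained.\<close>

definition degree :: "'a set \<Rightarrow> ('a \<Rightarrow> 'a \<Rightarrow> bool) \<Rightarrow> 'a \<Rightarrow> nat" where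
  "degree V adj x = card {y \<in> V. adj x y}"

lemma degree_eq_card_incident_edges:
  assumes sym: "\<And>x y. adj x y \<Longrightarrow> adj y x" and irrefl: "\<And>x. \<not> adj x x" and "x \<in> V"
  shows "degree V adj x = card {e \<in> edges V adj. x \<in> e}"
proof -
  have "bij_betw (\<lambda>y. {x, y}) {y \<in> V. adj x y} {e \<in> edges V adj. x \<in> e}"
  proof (rule bij_betwI')
    fix y z assume "y \<in> {y \<in> V. adj x y}" "z \<in> {y \<in> V. adj x y}"
    then show "({x, y} = {x, z}) = (y = z)" using irrefl by (auto simp: doubleton_eq_iff)
  next
    fix y assume "y \<in> {y \<in> V. adj x y}"
    then show "{x, y} \<in> {e \<in> edges V adj. x \<in> e}" using \<open>x \<in> V\<close> by (auto simp: edges_def)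
  next
    fix e assume "e \<in> {e \<in> edges V adj. x \<in> e}"
    then obtain a b where e: "e = {a, b}" "a \<in> V" "b \<in> V" "adj a b" "x \<in> e"
      by (auto simp: edges_def)
    then have "x = a \<and> e = {x, b} \<or> x = b \<and> e = {x, a}" by auto
    then show "\<exists>y\<in>{y \<in> V. adj x y}. e = {x, y}" using e sym by auto
  qed
  then show ?thesis by (simp add: degree_def bij_betw_same_card)
qed

lemma sum_degree_eq_twice_card_edges:
  assumes "finite V" and sym: "\<And>x y. adj x y \<Longrightarrow> adj y x" and irrefl: "\<And>x. \<not> adj x x"
  shows "(\<Sum>x\<in>V. degree V adj x) = 2 * card (edges V adj)"
proof -
  let ?E = "edges V adj"
  have "finite ?E"
    by (rule finite_subset[of _ "Pow V"]) (use \<open>finite V\<close> in \<open>auto simp: edges_def\<close>)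
  have two_ends: "card (V \<inter> e) = 2" if "e \<in> ?E" for e
    using that irrefl by (auto simp: edges_def card_insert_if)
  have "(\<Sum>x\<in>V. degree V adj x) = (\<Sum>x\<in>V. card {e \<in> ?E. x \<in> e})"
    using degree_eq_card_incident_edges[of adj, OF sym irrefl] by (intro sum.cong) auto
  also have "\<dots> = (\<Sum>x\<in>V. \<Sum>e\<in>?E. of_bool (x \<in> e))"
    using \<open>finite ?E\<close> by (intro sum.cong) (auto simp: Int_def)
  also have "\<dots> = (\<Sum>e\<in>?E. \<Sum>x\<in>V. of_bool (x \<in> e))"
    by (rule sum.swap)
  also have "\<dots> = (\<Sum>e\<in>?E. 2)"
    using \<open>finite V\<close> two_ends by (intro sum.cong) (auto simp: Int_def)
  finally show ?thesis by simp
qed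

definition transition_adj ::
  "'a set \<Rightarrow> ('a \<Rightarrow> 'a \<Rightarrow> bool) \<Rightarrow> 'c set \<Rightarrow> ('a \<Rightarrow> 'c) \<Rightarrow> 'a \<Rightarrow> 'a \<Rightarrow> bool" where
  "transition_adj V adj C K x y \<longleftrightarrow> adj x y \<and> proper_coloring V adj C (swap_colors K x y)"

lemma transition_edges_eq_edges_transition_adj:
  "transition_edges V adj C K = edges V (transition_adj V adj C K)"
  by (simp add: transition_edges_def edges_def transition_adj_def)

lemma transition_adj_sym:
  assumes "\<And>x y. adj x y \<Longrightarrow> adj y x" and "\<And>x. \<not> adj x x"
    and "transition_adj V adj C K x y"
  shows "transition_adj V adj C K y x"
proof -
  have "x \<noteq> y" using assms by (auto simp: transition_adj_def)
  then have "swap_colors K x y = swap_colors K y x" by (auto simp: swap_colors_def fun_eq_iff)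
  with assms show ?thesis by (simp add: transition_adj_def)
qed

lemma transition_adj_iff:
  assumes proper: "proper_coloring V adj C K" and "x \<in> V" "y \<in> V" "adj x y"
    and sym: "\<And>u v. adj u v \<Longrightarrow> adj v u" and irrefl: "\<And>u. \<not> adj u u"
  shows "transition_adj V adj C K x y \<longleftrightarrow>
           (\<forall>v\<in>V. adj x v \<longrightarrow> v \<noteq> y \<longrightarrow> K v \<noteq> K y) \<and>
           (\<forall>v\<in>V. adj y v \<longrightarrow> v \<noteq> x \<longrightarrow> K v \<noteq> K x)"
proof
  assume "transition_adj V adj C K x y"
  then have swapped: "proper_coloring V adj C (swap_colors K x y)"
    by (simp add: transition_adj_def)
  have "x \<noteq> y" using \<open>adj x y\<close> irrefl by auto
  show "(\<forall>v\<in>V. adj x v \<longrightarrow> v \<noteq> y \<longrightarrow> K v \<noteq> K y) \<and>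
        (\<forall>v\<in>V. adj y v \<longrightarrow> v \<noteq> x \<longrightarrow> K v \<noteq> K x)"
  proof (intro conjI ballI impI)
    fix v assume "v \<in> V" "adj x v" "v \<noteq> y"
    then have "swap_colors K x y x \<noteq> swap_colors K x y v"
      using swapped \<open>x \<in> V\<close> by (simp add: proper_coloring_def)
    moreover have "v \<noteq> x" using \<open>adj x v\<close> irrefl by auto
    ultimately show "K v \<noteq> K y" using \<open>v \<noteq> y\<close> \<open>x \<noteq> y\<close> by (simp add: swap_colors_def)
  next
    fix v assume "v \<in> V" "adj y v" "v \<noteq> x"
    then have "swap_colors K x y y \<noteq> swap_colors K x y v"
      using swapped \<open>y \<in> V\<close> by (simp add: proper_coloring_def)
    moreover have "v \<noteq> y" using \<open>adj y v\<close> irrefl by auto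
    ultimately show "K v \<noteq> K x" using \<open>v \<noteq> x\<close> \<open>x \<noteq> y\<close> by (simp add: swap_colors_def)
  qed
next
  assume avoid: "(\<forall>v\<in>V. adj x v \<longrightarrow> v \<noteq> y \<longrightarrow> K v \<noteq> K y) \<and>
                 (\<forall>v\<in>V. adj y v \<longrightarrow> v \<noteq> x \<longrightarrow> K v \<noteq> K x)"
  have "proper_coloring V adj C (swap_colors K x y)"
    unfolding proper_coloring_def
  proof (intro conjI ballI impI)
    fix u assume "u \<in> V"
    then show "swap_colors K x y u \<in> C"
      using proper \<open>x \<in> V\<close> \<open>y \<in> V\<close> by (auto simp: proper_coloring_def swap_colors_def)
  next
    fix u v assume uv: "u \<in> V" "v \<in> V" "adj u v"
    have "K u \<noteq> K v" "K x \<noteq> K y"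
      using proper uv \<open>x \<in> V\<close> \<open>y \<in> V\<close> \<open>adj x y\<close> by (auto simp: proper_coloring_def)
    moreover have "u \<noteq> v" using uv irrefl by auto
    ultimately show "swap_colors K x y u \<noteq> swap_colors K x y v"
      using avoid uv sym[OF uv(3)] by (auto simp: swap_colors_def)
  qed
  with \<open>adj x y\<close> show "transition_adj V adj C K x y" by (simp add: transition_adj_def)
qed

lemma robustness_eq_degree_sums:
  assumes "finite V" and sym: "\<And>x y. adj x y \<Longrightarrow> adj y x" and irrefl: "\<And>x. \<not> adj x x"
  shows "robustness V adj C K =
           real (\<Sum>x\<in>V. degree V (transition_adj V adj C K) x) / real (\<Sum>x\<in>V. degree V adj x)"
proof -
  have "(\<Sum>x\<in>V. degree V (transition_adj V adj C K) x) =
          2 * card (transition_edges V adj C K)"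
    unfolding transition_edges_eq_edges_transition_adj
  proof (rule sum_degree_eq_twice_card_edges[OF \<open>finite V\<close>])
    show "\<And>x y. transition_adj V adj C K x y \<Longrightarrow> transition_adj V adj C K y x"
      using transition_adj_sym sym irrefl by metis
    show "\<And>x. \<not> transition_adj V adj C K x x"
      using irrefl by (simp add: transition_adj_def)
  qed
  moreover have "(\<Sum>x\<in>V. degree V adj x) = 2 * card (edges V adj)"
    using sum_degree_eq_twice_card_edges \<open>finite V\<close> sym irrefl by metis
  ultimately show ?thesis by (simp add: robustness_def)
qed

text \<open>The transition neighbours of x get pairwise distinct colors other than K x; if they used
all of them, every neighbour would be a transition neighbour.\<close>

lemma degree_transition_adj_le:
  assumes proper: "proper_coloring V adj C K" and "finite C" and "finite V" and "x \<in> V"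
    and sym: "\<And>u v. adj u v \<Longrightarrow> adj v u" and irrefl: "\<And>u. \<not> adj u u"
    and many_neighbours: "card C \<le> degree V adj x"
  shows "degree V (transition_adj V adj C K) x \<le> card C - 2"
proof (rule ccontr)
  assume many_transitions: "\<not> ?thesis"
  let ?N = "{y \<in> V. adj x y}" and ?T = "{y \<in> V. transition_adj V adj C K x y}"
  have T_sub_N: "?T \<subseteq> ?N" by (auto simp: transition_adj_def)
  have unique: "w = y" if "y \<in> ?T" "w \<in> ?N" "K w = K y" for w y
  proof -
    have "adj x y" using that by (simp add: transition_adj_def)
    then show ?thesis
      using that transition_adj_iff[OF proper \<open>x \<in> V\<close> _ \<open>adj x y\<close> sym irrefl] by auto
  qed
  have "inj_on K ?T" using unique T_sub_N by (intro inj_onI) blast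
  have N_colors: "K ` ?N \<subseteq> C - {K x}"
    using proper \<open>x \<in> V\<close> by (force simp: proper_coloring_def)
  have card_other_colors: "card (C - {K x}) = card C - 1"
    using proper \<open>x \<in> V\<close> \<open>finite C\<close> by (auto simp: proper_coloring_def)
  have "card (K ` ?T) = card ?T" using \<open>inj_on K ?T\<close> by (rule card_image)
  then have "card (C - {K x}) \<le> card (K ` ?T)"
    using many_transitions card_other_colors by (simp add: degree_def)
  then have T_colors: "K ` ?T = C - {K x}"
    using N_colors T_sub_N \<open>finite C\<close> by (intro card_seteq) auto
  have "?N \<subseteq> ?T"
  proof
    fix w assume "w \<in> ?N"
    then obtain y where "y \<in> ?T" "K w = K y" using N_colors T_colors by blast
    with \<open>w \<in> ?N\<close> show "w \<in> ?T" using unique by auto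
  qed
  then have "degree V adj x \<le> card ?T"
    using \<open>finite V\<close> by (auto simp: degree_def intro: card_mono)
  also have "\<dots> = card C - 1" using \<open>card (K ` ?T) = card ?T\<close> T_colors card_other_colors by simp
  finally have "degree V adj x \<le> card C - 1" .
  moreover have "0 < card C"
    using proper \<open>x \<in> V\<close> \<open>finite C\<close> by (auto simp: proper_coloring_def card_gt_0_iff)
  ultimately show False using many_neighbours by linarith
qed

lemma proper_coloring_comp_inj:
  "inj f \<Longrightarrow> proper_coloring V adj (f ` C) (f \<circ> K) \<longleftrightarrow> proper_coloring V adj C K"
  by (auto simp: proper_coloring_def inj_image_mem_iff inj_eq)

lemma robustness_comp_inj:
  assumes "inj f"
  shows "robustness V adj (f ` C) (f \<circ> K) = robustness V adj C K"
proof -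
  have swap: "swap_colors (f \<circ> K) x y = f \<circ> swap_colors K x y" for x y
    by (auto simp: swap_colors_def fun_eq_iff)
  have "transition_adj V adj (f ` C) (f \<circ> K) = transition_adj V adj C K"
    by (intro ext) (simp add: transition_adj_def swap proper_coloring_comp_inj[OF assms])
  then show ?thesis by (simp add: robustness_def transition_edges_eq_edges_transition_adj)
qed

lemma finite_Z2n: "finite (Z2n n)"
  by (simp add: Z2n_def)

lemma card_Z2n: "card (Z2n n) = 2 ^ n"
  by (simp add: Z2n_def card_Pow)

lemma vadd_mem: "a \<in> vadd x y \<longleftrightarrow> (a \<in> x \<longleftrightarrow> a \<notin> y)"
  by (auto simp: vadd_def)

lemma vadd_commute: "vadd x y = vadd y x"
  by (auto simp: vadd_def)

lemma vadd_vadd_cancel: "vadd x (vadd x y) = y"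
  by (auto simp: vadd_def)

lemma vadd_eq_iff: "vadd x y = z \<longleftrightarrow> y = vadd x z"
  by (auto simp: vadd_def)

lemma vadd_in_Z2n: "x \<in> Z2n n \<Longrightarrow> y \<in> Z2n n \<Longrightarrow> vadd x y \<in> Z2n n"
  by (auto simp: vadd_def Z2n_def)

lemma fvec_mem: "a \<in> fvec n k \<longleftrightarrow> (a = k \<longleftrightarrow> a \<notin> {1..n})"
  by (auto simp: fvec_def vadd_def ebasis_def ones_def)

lemma fvec_eq: "k \<in> {1..n} \<Longrightarrow> fvec n k = {1..n} - {k}"
  by (auto simp: fvec_mem)

lemma fvec_in_Z2n: "k \<in> {1..n} \<Longrightarrow> fvec n k \<in> Z2n n"
  by (auto simp: fvec_eq Z2n_def)

lemma card_fvec: "k \<in> {1..n} \<Longrightarrow> card (fvec n k) = n - 1"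
  by (simp add: fvec_eq)

lemma fvec_eq_iff: "k \<in> {1..n} \<Longrightarrow> fvec n k = fvec n l \<longleftrightarrow> k = l"
  using fvec_mem[of k n k] fvec_mem[of k n l] by blast

lemma eq_fvec_if_card_ge:
  assumes "z \<in> Z2n n" "n - 1 \<le> card z" "k \<in> {1..n}" "k \<notin> z"
  shows "z = fvec n k"
proof -
  have "z \<subseteq> {1..n} - {k}" using assms by (auto simp: Z2n_def)
  moreover have "card ({1..n} - {k}) \<le> card z" using assms by simp
  ultimately show ?thesis using assms(3) by (simp add: fvec_eq card_seteq)
qed

lemma H2_adj_iff: "H2_adj n x y \<longleftrightarrow> n - 1 \<le> card (vadd x y)"
  by (simp add: H2_adj_def hamming_def)

lemma H2_adj_sym: "H2_adj n x y \<Longrightarrow> H2_adj n y x"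
  unfolding H2_adj_iff by (subst vadd_commute)

lemma H2_adj_irrefl: "2 \<le> n \<Longrightarrow> \<not> H2_adj n x x"
  by (simp add: H2_adj_iff vadd_def)

lemma mem_vadd_if_H2_adj:
  assumes "x \<in> Z2n n" "y \<in> Z2n n" "H2_adj n x y" "a \<in> {1..n}" "vadd x y \<noteq> fvec n a"
  shows "a \<in> vadd x y"
  using assms eq_fvec_if_card_ge[of "vadd x y" n a] by (auto simp: vadd_in_Z2n H2_adj_iff)

lemma far_vectors_eq:
  "{z \<in> Z2n n. n - 1 \<le> card z} = insert (ones n) (fvec n ` {1..n})"
proof (intro equalityI subsetI)
  fix z assume z: "z \<in> {z \<in> Z2n n. n - 1 \<le> card z}"
  show "z \<in> insert (ones n) (fvec n ` {1..n})"
  proof (cases "z = ones n")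
    case False
    have "z \<subseteq> ones n" using z by (simp add: Z2n_def ones_def)
    with \<open>z \<noteq> ones n\<close> obtain k where "k \<in> ones n" "k \<notin> z" by blast
    with z have "z = fvec n k" by (intro eq_fvec_if_card_ge) (auto simp: ones_def)
    with \<open>k \<in> ones n\<close> show ?thesis by (simp add: ones_def)
  qed simp
next
  fix z assume "z \<in> insert (ones n) (fvec n ` {1..n})"
  then consider "z = ones n" | k where "k \<in> {1..n}" "z = fvec n k" by blast
  then show "z \<in> {z \<in> Z2n n. n - 1 \<le> card z}"
  proof cases
    case 1
    then show ?thesis by (simp add: Z2n_def ones_def)
  next
    case 2
    then show ?thesis by (simp add: fvec_in_Z2n card_fvec)
  qed
qed

lemma degree_H2:
  assumes "x \<in> Z2n n"
  shows "degree (Z2n n) (H2_adj n) x = n + 1"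
proof -
  have "bij_betw (vadd x) {y \<in> Z2n n. H2_adj n x y} {z \<in> Z2n n. n - 1 \<le> card z}"
    using assms
    by (intro bij_betw_byWitness[where f'="vadd x"]) (auto simp: vadd_in_Z2n vadd_vadd_cancel H2_adj_iff)
  then have "degree (Z2n n) (H2_adj n) x = card {z \<in> Z2n n. n - 1 \<le> card z}"
    by (simp add: degree_def bij_betw_same_card)
  also have "\<dots> = card (insert (ones n) (fvec n ` {1..n}))"
    unfolding far_vectors_eq ..
  also have "\<dots> = n + 1"
  proof -
    have "inj_on (fvec n) {1..n}" by (intro inj_onI) (simp add: fvec_eq_iff)
    moreover have "ones n \<notin> fvec n ` {1..n}"
    proof
      assume "ones n \<in> fvec n ` {1..n}"
      then obtain k where "k \<in> {1..n}" "ones n = fvec n k" by blast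
      then show False using fvec_mem[of k n k] unfolding ones_def by blast
    qed
    ultimately show ?thesis by (simp add: card_image)
  qed
  finally show ?thesis .
qed

lemma robustness_H2:
  assumes "2 \<le> n"
  shows "robustness (Z2n n) (H2_adj n) C K =
           real (\<Sum>x\<in>Z2n n. degree (Z2n n) (transition_adj (Z2n n) (H2_adj n) C K) x)
             / ((real n + 1) * 2 ^ n)"
proof -
  have "(\<Sum>x\<in>Z2n n. degree (Z2n n) (H2_adj n) x) = (\<Sum>x\<in>Z2n n. n + 1)"
    by (intro sum.cong) (simp_all add: degree_H2)
  moreover have "robustness (Z2n n) (H2_adj n) C K =
      real (\<Sum>x\<in>Z2n n. degree (Z2n n) (transition_adj (Z2n n) (H2_adj n) C K) x)
        / real (\<Sum>x\<in>Z2n n. degree (Z2n n) (H2_adj n) x)"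
    by (rule robustness_eq_degree_sums)
      (rule finite_Z2n, erule H2_adj_sym, rule H2_adj_irrefl[OF assms])
  ultimately show ?thesis by (simp add: card_Z2n algebra_simps)
qed

lemma robustness_H2_le:
  assumes "2 \<le> n" and proper: "proper_coloring (Z2n n) (H2_adj n) C K"
    and "finite C" and "card C \<le> n + 1"
  shows "robustness (Z2n n) (H2_adj n) C K \<le> real (card C - 2) / (real n + 1)"
proof -
  have "(\<Sum>x\<in>Z2n n. degree (Z2n n) (transition_adj (Z2n n) (H2_adj n) C K) x)
          \<le> (\<Sum>x\<in>Z2n n. card C - 2)"
  proof (rule sum_mono)
    fix x assume "x \<in> Z2n n"
    then show "degree (Z2n n) (transition_adj (Z2n n) (H2_adj n) C K) x \<le> card C - 2"
      using degree_transition_adj_le[OF proper \<open>finite C\<close> _ _ H2_adj_sym H2_adj_irrefl[OF \<open>2 \<le> n\<close>]]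
        degree_H2 \<open>card C \<le> n + 1\<close> finite_Z2n
      by simp
  qed
  also have "\<dots> = (card C - 2) * 2 ^ n" by (simp add: card_Z2n)
  finally have sum_le: "(\<Sum>x\<in>Z2n n. degree (Z2n n) (transition_adj (Z2n n) (H2_adj n) C K) x)
                          \<le> (card C - 2) * 2 ^ n" .
  have "robustness (Z2n n) (H2_adj n) C K \<le> real ((card C - 2) * 2 ^ n) / ((real n + 1) * 2 ^ n)"
    unfolding robustness_H2[OF \<open>2 \<le> n\<close>]
    by (rule divide_right_mono[OF of_nat_mono[OF sum_le]]) simp
  also have "\<dots> = real (card C - 2) / (real n + 1)" by simp
  finally show ?thesis .
qed

lemma coord_coloring_neq:
  "a \<in> {i, j} \<Longrightarrow> a \<in> vadd u v \<Longrightarrow> coord_coloring i j u \<noteq> coord_coloring i j v"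
  by (auto simp: coord_coloring_def vadd_mem)

context
  fixes n i j :: nat
  assumes n_ge_3: "3 \<le> n" and ij: "1 \<le> i" "i < j" "j \<le> n"
begin

lemma coord_coloring_proper: "proper_coloring (Z2n n) (H2_adj n) UNIV (coord_coloring i j)"
  unfolding proper_coloring_def
proof (intro conjI ballI impI)
  fix u v assume uv: "u \<in> Z2n n" "v \<in> Z2n n" "H2_adj n u v"
  show "coord_coloring i j u \<noteq> coord_coloring i j v"
  proof (cases "vadd u v = fvec n i")
    case True
    then have "j \<in> vadd u v" using ij fvec_mem[of j n i] by auto
    then show ?thesis by (intro coord_coloring_neq[of j]) auto
  next
    case False
    then have "i \<in> vadd u v" using mem_vadd_if_H2_adj[OF uv] ij by auto
    then show ?thesis by (intro coord_coloring_neq[of i]) auto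
  qed
qed simp

lemma coord_coloring_avoids:
  assumes "x \<in> Z2n n" "v \<in> Z2n n" "H2_adj n x v" "v \<noteq> y"
    and "vadd x y = fvec n a" "a \<in> {i, j}"
  shows "coord_coloring i j v \<noteq> coord_coloring i j y"
proof -
  have "a \<in> {1..n}" using \<open>a \<in> {i, j}\<close> ij by auto
  have "vadd x v \<noteq> fvec n a" using assms(4,5) vadd_eq_iff by metis
  then have "a \<in> vadd x v" using mem_vadd_if_H2_adj assms(1-3) \<open>a \<in> {1..n}\<close> by blast
  moreover have "a \<notin> vadd x y" using assms(5) fvec_mem[of a n a] \<open>a \<in> {1..n}\<close> by simp
  ultimately have "a \<in> vadd v y" by (auto simp: vadd_mem)
  then show ?thesis using coord_coloring_neq \<open>a \<in> {i, j}\<close> by blast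
qed

lemma vadd_in_fvecs_if_transition_adj_coord:
  assumes "x \<in> Z2n n" "y \<in> Z2n n"
    and transition: "transition_adj (Z2n n) (H2_adj n) UNIV (coord_coloring i j) x y"
  shows "vadd x y \<in> {fvec n i, fvec n j}"
proof (rule ccontr)
  assume not_fvec: "vadd x y \<notin> {fvec n i, fvec n j}"
  have "H2_adj n x y" using transition by (simp add: transition_adj_def)
  then have "i \<in> vadd x y" "j \<in> vadd x y"
    using mem_vadd_if_H2_adj[OF assms(1,2)] not_fvec ij by auto
  txt \<open>As n \<ge> 3, some z \<noteq> x + y of weight at least n - 1 contains both i and j; then x + z is
    a neighbour of x other than y with the color of y.\<close>
  obtain z where z: "z \<in> Z2n n" "n - 1 \<le> card z" "i \<in> z" "j \<in> z" "z \<noteq> vadd x y"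
  proof (cases "vadd x y = ones n")
    case True
    have "\<not> {1..n} \<subseteq> {i, j}"
    proof
      assume "{1..n} \<subseteq> {i, j}"
      then have "card {1..n} \<le> card {i, j}" by (intro card_mono) auto
      then show False using n_ge_3 ij by (simp add: card_insert_if)
    qed
    then obtain k where "k \<in> {1..n}" "k \<notin> {i, j}" by blast
    moreover have "fvec n k \<noteq> ones n" using \<open>k \<in> {1..n}\<close> fvec_mem[of k n k] unfolding ones_def by blast
    ultimately show ?thesis
      using that[of "fvec n k"] True ij fvec_in_Z2n card_fvec by (simp add: fvec_mem)
  next
    case False
    then show ?thesis using that[of "ones n"] ij by (simp add: Z2n_def ones_def)
  qed
  define w where "w = vadd x z"
  have "w \<in> Z2n n" using assms(1) z(1) by (simp add: w_def vadd_in_Z2n)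
  moreover have "H2_adj n x w" using z(2) by (simp add: w_def vadd_vadd_cancel H2_adj_iff)
  moreover have "w \<noteq> y" using z(5) vadd_eq_iff by (metis w_def)
  moreover have "coord_coloring i j w = coord_coloring i j y"
    using z(3,4) \<open>i \<in> vadd x y\<close> \<open>j \<in> vadd x y\<close> by (auto simp: w_def coord_coloring_def vadd_mem)
  moreover have "\<And>u. \<not> H2_adj n u u" using H2_adj_irrefl n_ge_3 by simp
  ultimately show False
    using transition transition_adj_iff[OF coord_coloring_proper assms(1,2) \<open>H2_adj n x y\<close>
        H2_adj_sym] by blast
qed

lemma transition_adj_coord_iff:
  assumes "x \<in> Z2n n" "y \<in> Z2n n"
  shows "transition_adj (Z2n n) (H2_adj n) UNIV (coord_coloring i j) x y \<longleftrightarrow>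
           vadd x y \<in> {fvec n i, fvec n j}"
proof
  assume "vadd x y \<in> {fvec n i, fvec n j}"
  then obtain a where a: "a \<in> {i, j}" "vadd x y = fvec n a" by blast
  then have "a \<in> {1..n}" using ij by auto
  then have "H2_adj n x y" using a(2) card_fvec by (simp add: H2_adj_iff)
  moreover have "vadd y x = fvec n a" using a(2) by (simp add: vadd_commute)
  moreover have "\<And>u. \<not> H2_adj n u u" using H2_adj_irrefl n_ge_3 by simp
  ultimately show "transition_adj (Z2n n) (H2_adj n) UNIV (coord_coloring i j) x y"
    using transition_adj_iff[OF coord_coloring_proper assms _ H2_adj_sym]
      coord_coloring_avoids[OF assms(1)] coord_coloring_avoids[OF assms(2)] a
    by auto
qed (rule vadd_in_fvecs_if_transition_adj_coord[OF assms])

lemma degree_transition_adj_coord: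
  assumes "x \<in> Z2n n"
  shows "degree (Z2n n) (transition_adj (Z2n n) (H2_adj n) UNIV (coord_coloring i j)) x = 2"
proof -
  let ?F = "{fvec n i, fvec n j}"
  have "?F \<subseteq> Z2n n" using ij fvec_in_Z2n by auto
  have "{y \<in> Z2n n. transition_adj (Z2n n) (H2_adj n) UNIV (coord_coloring i j) x y} = vadd x ` ?F"
  proof (intro equalityI subsetI)
    fix y assume "y \<in> {y \<in> Z2n n. transition_adj (Z2n n) (H2_adj n) UNIV (coord_coloring i j) x y}"
    then have "vadd x y \<in> ?F" using transition_adj_coord_iff[OF assms] by blast
    then show "y \<in> vadd x ` ?F" using vadd_vadd_cancel by (metis image_eqI)
  next
    fix y assume "y \<in> vadd x ` ?F"
    then show "y \<in> {y \<in> Z2n n. transition_adj (Z2n n) (H2_adj n) UNIV (coord_coloring i j) x y}"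
      using \<open>?F \<subseteq> Z2n n\<close> transition_adj_coord_iff[OF assms] assms
      by (auto simp: vadd_in_Z2n vadd_vadd_cancel)
  qed
  moreover have "vadd x (fvec n i) \<noteq> vadd x (fvec n j)"
  proof
    assume "vadd x (fvec n i) = vadd x (fvec n j)"
    then have "fvec n i = fvec n j" by (metis vadd_vadd_cancel)
    then show False using ij fvec_eq_iff[of i n j] by simp
  qed
  ultimately show ?thesis by (simp add: degree_def)
qed

lemma robustness_coord_coloring:
  "robustness (Z2n n) (H2_adj n) UNIV (coord_coloring i j) = 2 / (real n + 1)"
proof -
  have "(\<Sum>x\<in>Z2n n. degree (Z2n n) (transition_adj (Z2n n) (H2_adj n) UNIV (coord_coloring i j)) x)
          = (\<Sum>x\<in>Z2n n. 2)"
    by (intro sum.cong) (simp_all add: degree_transition_adj_coord)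
  moreover have "2 \<le> n" using n_ge_3 by simp
  ultimately show ?thesis by (simp add: robustness_H2 card_Z2n del: of_nat_sum)
qed

end

definition bool_pair_code :: "bool \<times> bool \<Rightarrow> nat" where
  "bool_pair_code p = of_bool (fst p) + 2 * of_bool (snd p)"

lemma inj_bool_pair_code: "inj bool_pair_code"
  by (auto simp: inj_def bool_pair_code_def)

lemma range_bool_pair_code: "range bool_pair_code = {..<4}"
proof -
  have "range bool_pair_code =
          bool_pair_code ` {(False, False), (True, False), (False, True), (True, True)}"
    by (rule arg_cong[where f = "image bool_pair_code"]) auto
  also have "\<dots> = {0, 1, 2, 3}" by (simp add: bool_pair_code_def eval_nat_numeral)
  also have "\<dots> = {..<4}" by auto
  finally show ?thesis .
qed

theorem proposition4p10:
  fixes n i j :: nat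
  assumes "n \<ge> 3" and "1 \<le> i" and "i < j" and "j \<le> n"
  shows "transition_edges (Z2n n) (H2_adj n) (UNIV :: (bool \<times> bool) set) (coord_coloring i j)
           = {{x, y} | x y. x \<in> Z2n n \<and> y \<in> Z2n n \<and>
                            vadd x y \<in> {fvec n i, fvec n j}}
       \<and> robustness (Z2n n) (H2_adj n) (UNIV :: (bool \<times> bool) set) (coord_coloring i j)
           = 2 / (real n + 1)
       \<and> (\<forall>K' :: nat set \<Rightarrow> nat. proper_coloring (Z2n n) (H2_adj n) {..<4} K' \<longrightarrow>
             robustness (Z2n n) (H2_adj n) {..<4} K' \<le> 2 / (real n + 1))
       \<and> (\<exists>K' :: nat set \<Rightarrow> nat. proper_coloring (Z2n n) (H2_adj n) {..<4} K' \<and>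
             robustness (Z2n n) (H2_adj n) {..<4} K' = 2 / (real n + 1))"
proof -
  have transitions:
    "transition_edges (Z2n n) (H2_adj n) UNIV (coord_coloring i j)
       = {{x, y} | x y. x \<in> Z2n n \<and> y \<in> Z2n n \<and> vadd x y \<in> {fvec n i, fvec n j}}"
    unfolding transition_edges_eq_edges_transition_adj edges_def
    using transition_adj_coord_iff[OF assms] by blast
  have upper_bound: "robustness (Z2n n) (H2_adj n) {..<4} K' \<le> 2 / (real n + 1)"
    if "proper_coloring (Z2n n) (H2_adj n) {..<4} K'" for K' :: "nat set \<Rightarrow> nat"
    using robustness_H2_le[OF _ that] assms by simp
  let ?K = "bool_pair_code \<circ> coord_coloring i j"
  have "proper_coloring (Z2n n) (H2_adj n) {..<4} ?K"
    using proper_coloring_comp_inj[OF inj_bool_pair_code, where C = UNIV]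
      coord_coloring_proper[OF assms]
    unfolding range_bool_pair_code by blast
  moreover have "robustness (Z2n n) (H2_adj n) {..<4} ?K = 2 / (real n + 1)"
    using robustness_comp_inj[OF inj_bool_pair_code, where C = UNIV]
      robustness_coord_coloring[OF assms]
    unfolding range_bool_pair_code by (rule trans)
  ultimately show ?thesis
    using transitions robustness_coord_coloring[OF assms] upper_bound by blast
qed

end
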